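(* Let $a\in\mathrm{Im}(\mathbb{H})$ and $b\in\mathbb{H}$ have norm one. Then the three algebras $\mathbb{H}\times\mathbb{H}_{(T_{a,\bar a}\circ\sigma_{\mathbb{H}},\,I_{\mathbb{H}})}$, $\mathbb{H}\times\mathbb{H}_{(I_{\mathbb{H}},\,-T_{b,b}\circ\sigma_{\mathbb{H}})}$ and ${}^*\mathbb{O}(i,1)$ are mutually isomorphic.
   Context: For $a,b\in\mathbb{H}$, $T_{a,b}(x)=axb$; $\sigma_{\mathbb{H}}(x)=\bar x$; $I_{\mathbb{H}}$ is the identity. $\mathbb{O}=\mathbb{H}\times\mathbb{H}$ with Cayley–Dickson product $(x,y)\bullet(u,v)=(xu-\bar v y,\ y\bar u+vx)$, conjugation $\overline{(x,y)}=(\bar x,-y)$, and $i=(i,0)$. For linear maps $f,g$ of $\mathbb{H}$, $\mathbb{H}\times\mathbb{H}_{(f,g)}$ is $\mathbb{H}\times\mathbb{H}$ with product $(x,y)\odot(u,v)=(f(x),g(y))\bullet(u,v)$. ${}^*\mathbb{O}(i,1)$ is $\mathbb{O}$ with product $x\odot y=(\bar x i)y$. *)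

theory Defs
  imports "HOL-Analysis.Analysis"
begin

datatype quat = Quat (qr: real) (qi: real) (qj: real) (qk: real)

instantiation quat :: ab_group_add
begin
definition "0 = Quat 0 0 0 0"
definition "x + y = Quat (qr x + qr y) (qi x + qi y) (qj x + qj y) (qk x + qk y)"
definition "- x = Quat (- qr x) (- qi x) (- qj x) (- qk x)"
definition "x - y = Quat (qr x - qr y) (qi x - qi y) (qj x - qj y) (qk x - qk y)"
instance
  by standard (auto simp: zero_quat_def plus_quat_def uminus_quat_def minus_quat_def)
end

instantiation quat :: real_vector
begin
definition "scaleR r x = Quat (r * qr x) (r * qi x) (r * qj x) (r * qk x)"
instance
  by standard (auto simp: scaleR_quat_def plus_quat_def algebra_simps)
end

definition qmult :: "quat \<Rightarrow> quat \<Rightarrow> quat" (infixl "\<cdot>\<^sub>q" 70) where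
  "x \<cdot>\<^sub>q y = Quat
     (qr x * qr y - qi x * qi y - qj x * qj y - qk x * qk y)
     (qr x * qi y + qi x * qr y + qj x * qk y - qk x * qj y)
     (qr x * qj y - qi x * qk y + qj x * qr y + qk x * qi y)
     (qr x * qk y + qi x * qj y - qj x * qi y + qk x * qr y)"

definition qcnj :: "quat \<Rightarrow> quat" where
  "qcnj x = Quat (qr x) (- qi x) (- qj x) (- qk x)"

definition qnorm :: "quat \<Rightarrow> real" where
  "qnorm x = sqrt ((qr x)\<^sup>2 + (qi x)\<^sup>2 + (qj x)\<^sup>2 + (qk x)\<^sup>2)"

definition qImag :: "quat set" where
  "qImag = {x. qr x = 0}"

definition qunit_i :: quat where "qunit_i = Quat 0 1 0 0"

definition qT :: "quat \<Rightarrow> quat \<Rightarrow> quat \<Rightarrow> quat" where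
  "qT a b x = a \<cdot>\<^sub>q x \<cdot>\<^sub>q b"

section \<open>Octonions via Cayley--Dickson on H \<times> H\<close>

type_synonym oct = "quat \<times> quat"

definition omult :: "oct \<Rightarrow> oct \<Rightarrow> oct" (infixl "\<bullet>\<^sub>O" 70) where
  "p \<bullet>\<^sub>O q = (case p of (x, y) \<Rightarrow> case q of (u, v) \<Rightarrow>
      (x \<cdot>\<^sub>q u - qcnj v \<cdot>\<^sub>q y, y \<cdot>\<^sub>q qcnj u + v \<cdot>\<^sub>q x))"

definition ocnj :: "oct \<Rightarrow> oct" where
  "ocnj p = (case p of (x, y) \<Rightarrow> (qcnj x, - y))"

definition ounit_i :: oct where "ounit_i = (qunit_i, 0)"

text \<open>The algebra H \<times> H_(f,g): product (x,y) \<odot> (u,v) = (f x, g y) \<bullet> (u,v).\<close>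
definition HH_mult :: "(quat \<Rightarrow> quat) \<Rightarrow> (quat \<Rightarrow> quat) \<Rightarrow> oct \<Rightarrow> oct \<Rightarrow> oct" where
  "HH_mult f g p q = (case p of (x, y) \<Rightarrow> (f x, g y) \<bullet>\<^sub>O q)"

text \<open>The algebra *O(i,1): product x \<odot> y = (conj(x) i) y.\<close>
definition starO_mult :: "oct \<Rightarrow> oct \<Rightarrow> oct" where
  "starO_mult x y = (ocnj x \<bullet>\<^sub>O ounit_i) \<bullet>\<^sub>O y"

text \<open>Isomorphism of real algebras sharing the underlying vector space H \<times> H:
  a real-linear bijection intertwining the two products.\<close>
definition alg_iso :: "(oct \<Rightarrow> oct \<Rightarrow> oct) \<Rightarrow> (oct \<Rightarrow> oct \<Rightarrow> oct) \<Rightarrow> (oct \<Rightarrow> oct) \<Rightarrow> bool" where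
  "alg_iso m1 m2 \<phi> \<longleftrightarrow> linear \<phi> \<and> bij \<phi> \<and> (\<forall>p q. \<phi> (m1 p q) = m2 (\<phi> p) (\<phi> q))"

definition alg_isomorphic :: "(oct \<Rightarrow> oct \<Rightarrow> oct) \<Rightarrow> (oct \<Rightarrow> oct \<Rightarrow> oct) \<Rightarrow> bool" where
  "alg_isomorphic m1 m2 \<longleftrightarrow> (\<exists>\<phi>. alg_iso m1 m2 \<phi>)"

end

theory Submission
  imports Defs
begin

text \<open>Every algebra in question is isomorphic to \<open>H \<times> H_(T_{i,-i} \<circ> \<sigma>, I)\<close>, and each isomorphism
  is an automorphism of the octonions intertwining the two twists.  Conjugation by a unit
  quaternion \<open>p\<close> with \<open>p i p\<^sup>* = a\<close> turns the twist for \<open>i\<close> into the twist for \<open>a\<close>; left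
  multiplication of the second coordinate by \<open>b\<close> turns \<open>-T_{1,1} \<circ> \<sigma>\<close> into \<open>-T_{b,b} \<circ> \<sigma>\<close>;
  a signed permutation of the standard basis of \<open>\<bullet>\<^sub>O\<close> exchanges \<open>(I, -\<sigma>)\<close> and
  \<open>(T_{i,-i} \<circ> \<sigma>, I)\<close>; finally \<open>(x, y) \<mapsto> (-x i, y)\<close> identifies \<open>*O(i,1)\<close> directly.\<close>

lemma quat_eqI:
  "qr x = qr y \<Longrightarrow> qi x = qi y \<Longrightarrow> qj x = qj y \<Longrightarrow> qk x = qk y \<Longrightarrow> x = y"
  by (cases x; cases y) auto

lemma quat_component_simps [simp]:
  "qr 0 = 0" "qi 0 = 0" "qj 0 = 0" "qk 0 = 0"
  "qr (x + y) = qr x + qr y" "qi (x + y) = qi x + qi y"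
  "qj (x + y) = qj x + qj y" "qk (x + y) = qk x + qk y"
  "qr (x - y) = qr x - qr y" "qi (x - y) = qi x - qi y"
  "qj (x - y) = qj x - qj y" "qk (x - y) = qk x - qk y"
  "qr (- x) = - qr x" "qi (- x) = - qi x" "qj (- x) = - qj x" "qk (- x) = - qk x"
  "qr (c *\<^sub>R x) = c * qr x" "qi (c *\<^sub>R x) = c * qi x"
  "qj (c *\<^sub>R x) = c * qj x" "qk (c *\<^sub>R x) = c * qk x"
  "qr (x \<cdot>\<^sub>q y) = qr x * qr y - qi x * qi y - qj x * qj y - qk x * qk y"
  "qi (x \<cdot>\<^sub>q y) = qr x * qi y + qi x * qr y + qj x * qk y - qk x * qj y"
  "qj (x \<cdot>\<^sub>q y) = qr x * qj y - qi x * qk y + qj x * qr y + qk x * qi y"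
  "qk (x \<cdot>\<^sub>q y) = qr x * qk y + qi x * qj y - qj x * qi y + qk x * qr y"
  "qr (qcnj x) = qr x" "qi (qcnj x) = - qi x" "qj (qcnj x) = - qj x" "qk (qcnj x) = - qk x"
  by (simp_all add: zero_quat_def plus_quat_def minus_quat_def uminus_quat_def scaleR_quat_def
      qmult_def qcnj_def)

definition qone :: quat where "qone = Quat 1 0 0 0"

lemma qone_components [simp]: "qr qone = 1" "qi qone = 0" "qj qone = 0" "qk qone = 0"
  by (simp_all add: qone_def)

lemma qunit_i_components [simp]: "qr qunit_i = 0" "qi qunit_i = 1" "qj qunit_i = 0" "qk qunit_i = 0"
  by (simp_all add: qunit_i_def)

named_theorems quat_algebra

lemma
  shows qmult_assoc [quat_algebra]: "x \<cdot>\<^sub>q y \<cdot>\<^sub>q z = x \<cdot>\<^sub>q (y \<cdot>\<^sub>q z)"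
    and qmult_add_right [quat_algebra]: "x \<cdot>\<^sub>q (y + z) = x \<cdot>\<^sub>q y + x \<cdot>\<^sub>q z"
    and qmult_add_left [quat_algebra]: "(y + z) \<cdot>\<^sub>q x = y \<cdot>\<^sub>q x + z \<cdot>\<^sub>q x"
    and qmult_diff_right [quat_algebra]: "x \<cdot>\<^sub>q (y - z) = x \<cdot>\<^sub>q y - x \<cdot>\<^sub>q z"
    and qmult_diff_left [quat_algebra]: "(y - z) \<cdot>\<^sub>q x = y \<cdot>\<^sub>q x - z \<cdot>\<^sub>q x"
    and qmult_minus_left [quat_algebra]: "(- y) \<cdot>\<^sub>q x = - (y \<cdot>\<^sub>q x)"
    and qmult_minus_right [quat_algebra]: "x \<cdot>\<^sub>q (- y) = - (x \<cdot>\<^sub>q y)"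
    and qmult_scaleR_left [quat_algebra]: "(c *\<^sub>R x) \<cdot>\<^sub>q y = c *\<^sub>R (x \<cdot>\<^sub>q y)"
    and qmult_scaleR_right [quat_algebra]: "x \<cdot>\<^sub>q (c *\<^sub>R y) = c *\<^sub>R (x \<cdot>\<^sub>q y)"
    and qmult_qone_left [quat_algebra]: "qone \<cdot>\<^sub>q x = x"
    and qmult_qone_right [quat_algebra]: "x \<cdot>\<^sub>q qone = x"
    and qcnj_qmult [quat_algebra]: "qcnj (x \<cdot>\<^sub>q y) = qcnj y \<cdot>\<^sub>q qcnj x"
    and qcnj_qcnj [quat_algebra]: "qcnj (qcnj x) = x"
    and qcnj_add [quat_algebra]: "qcnj (x + y) = qcnj x + qcnj y"
    and qcnj_diff [quat_algebra]: "qcnj (x - y) = qcnj x - qcnj y"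
    and qcnj_minus [quat_algebra]: "qcnj (- x) = - qcnj x"
    and qcnj_scaleR [quat_algebra]: "qcnj (c *\<^sub>R x) = c *\<^sub>R qcnj x"
    and qcnj_qone [quat_algebra]: "qcnj qone = qone"
  by (rule quat_eqI; simp add: algebra_simps)+

lemma qnorm_squared: "(qnorm x)\<^sup>2 = (qr x)\<^sup>2 + (qi x)\<^sup>2 + (qj x)\<^sup>2 + (qk x)\<^sup>2"
  by (simp add: qnorm_def)

lemma qnorm_eq_0_iff: "qnorm x = 0 \<longleftrightarrow> x = 0"
  by (auto simp: qnorm_def add_nonneg_eq_0_iff intro: quat_eqI)

lemma qnorm_pos_iff: "0 < qnorm x \<longleftrightarrow> x \<noteq> 0"
  by (simp add: less_le qnorm_eq_0_iff) (simp add: qnorm_def)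

lemma qnorm_scaleR: "qnorm (c *\<^sub>R x) = \<bar>c\<bar> * qnorm x"
proof -
  have "(c * qr x)\<^sup>2 + (c * qi x)\<^sup>2 + (c * qj x)\<^sup>2 + (c * qk x)\<^sup>2
      = c\<^sup>2 * ((qr x)\<^sup>2 + (qi x)\<^sup>2 + (qj x)\<^sup>2 + (qk x)\<^sup>2)"
    by (simp add: power_mult_distrib algebra_simps)
  then show ?thesis
    by (simp add: qnorm_def real_sqrt_mult)
qed

lemma qmult_qcnj_right: "x \<cdot>\<^sub>q qcnj x = (qnorm x)\<^sup>2 *\<^sub>R qone"
  and qmult_qcnj_left: "qcnj x \<cdot>\<^sub>q x = (qnorm x)\<^sup>2 *\<^sub>R qone"
  by (rule quat_eqI; simp add: qnorm_squared; simp add: power2_eq_square algebra_simps)+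

lemma
  assumes "qnorm p = 1"
  shows unit_qmult_qcnj_right: "p \<cdot>\<^sub>q qcnj p = qone"
    and unit_qmult_qcnj_left: "qcnj p \<cdot>\<^sub>q p = qone"
    and unit_qmult_qcnj_cancel: "p \<cdot>\<^sub>q (qcnj p \<cdot>\<^sub>q x) = x"
    and unit_qcnj_qmult_cancel: "qcnj p \<cdot>\<^sub>q (p \<cdot>\<^sub>q x) = x"
  using assms by (simp_all add: qmult_qcnj_right qmult_qcnj_left qmult_qone_left
      flip: qmult_assoc)

lemmas unit_quat_cancel = unit_qmult_qcnj_right unit_qmult_qcnj_left
  unit_qmult_qcnj_cancel unit_qcnj_qmult_cancel

lemma qcnj_imaginary: "a \<in> qImag \<Longrightarrow> qcnj a = - a"
  by (rule quat_eqI) (simp_all add: qImag_def)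

lemma unit_imaginary_conjugate_qunit_i:
  assumes "a \<in> qImag" and "qnorm a = 1"
  obtains p where "qnorm p = 1" and "a = p \<cdot>\<^sub>q qunit_i \<cdot>\<^sub>q qcnj p"
proof (cases "a \<cdot>\<^sub>q qunit_i = qone")
  case True
  have "qnorm qunit_i = 1"
    by (simp add: qnorm_def)
  then have "a = (a \<cdot>\<^sub>q qunit_i) \<cdot>\<^sub>q qcnj qunit_i"
    by (simp add: qmult_assoc unit_qmult_qcnj_right qmult_qone_right)
  then have "a = Quat 0 0 1 0 \<cdot>\<^sub>q qunit_i \<cdot>\<^sub>q qcnj (Quat 0 0 1 0)"
    using True by (auto simp: qmult_qone_left intro: quat_eqI)
  then show thesis
    by (rule that[rotated]) (simp add: qnorm_def)
next
  case False
  \<comment> \<open>\<open>q = 1 - a i\<close> satisfies \<open>q i = a q\<close>, because \<open>a\<close> and \<open>i\<close> both square to \<open>-1\<close>.\<close>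
  define q where "q = qone - a \<cdot>\<^sub>q qunit_i"
  have "a \<cdot>\<^sub>q a = - qone"
    using qmult_qcnj_right[of a] assms by (simp add: qcnj_imaginary qmult_minus_right minus_equation_iff)
  then have a_square: "a \<cdot>\<^sub>q (a \<cdot>\<^sub>q x) = - x" for x
    by (simp add: qmult_minus_left qmult_qone_left flip: qmult_assoc)
  have i_square: "qunit_i \<cdot>\<^sub>q qunit_i = - qone"
    by (rule quat_eqI) simp_all
  have intertwine: "q \<cdot>\<^sub>q qunit_i = a \<cdot>\<^sub>q q"
    by (simp add: q_def qmult_diff_left qmult_diff_right qmult_assoc i_square a_square
        qmult_minus_right qmult_qone_left qmult_qone_right)
  have n_pos: "qnorm q > 0"
    using False by (simp add: q_def qnorm_pos_iff)
  define p where "p = (1 / qnorm q) *\<^sub>R q"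
  have "qnorm p = 1"
    using n_pos by (simp add: p_def qnorm_scaleR)
  have "p \<cdot>\<^sub>q qunit_i \<cdot>\<^sub>q qcnj p = (1 / qnorm q)\<^sup>2 *\<^sub>R (q \<cdot>\<^sub>q qunit_i \<cdot>\<^sub>q qcnj q)"
    by (simp add: p_def qmult_scaleR_left qmult_scaleR_right qcnj_scaleR power2_eq_square)
  also have "\<dots> = (1 / qnorm q)\<^sup>2 *\<^sub>R ((qnorm q)\<^sup>2 *\<^sub>R a)"
    by (simp add: intertwine qmult_assoc qmult_qcnj_right qmult_scaleR_right qmult_qone_right)
  also have "\<dots> = a"
    using n_pos by (simp add: power2_eq_square)
  finally show thesis
    using \<open>qnorm p = 1\<close> that by simp
qed

lemma alg_iso_inv:
  assumes "alg_iso m1 m2 \<phi>"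
  shows "alg_iso m2 m1 (inv \<phi>)"
proof -
  have lin: "linear \<phi>" and bij: "bij \<phi>" and hom: "\<And>p q. \<phi> (m1 p q) = m2 (\<phi> p) (\<phi> q)"
    using assms unfolding alg_iso_def by auto
  have right_inv: "\<phi> (inv \<phi> x) = x" for x
    using bij by (simp add: bij_is_surj surj_f_inv_f)
  have left_inv: "inv \<phi> (\<phi> x) = x" for x
    using bij by (simp add: bij_is_inj)
  have "linear (inv \<phi>)"
  proof (rule linearI)
    fix x y r
    have "\<phi> (inv \<phi> x + inv \<phi> y) = x + y"
      by (simp add: lin linear_add right_inv)
    then show "inv \<phi> (x + y) = inv \<phi> x + inv \<phi> y"
      by (metis left_inv)
    have "\<phi> (r *\<^sub>R inv \<phi> x) = r *\<^sub>R x"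
      by (simp add: lin linear_scale right_inv)
    then show "inv \<phi> (r *\<^sub>R x) = r *\<^sub>R inv \<phi> x"
      by (metis left_inv)
  qed
  moreover have "inv \<phi> (m2 p q) = m1 (inv \<phi> p) (inv \<phi> q)" for p q
    by (metis hom left_inv right_inv)
  ultimately show ?thesis
    using bij unfolding alg_iso_def by (simp add: bij_imp_bij_inv)
qed

lemma alg_iso_comp:
  "alg_iso m1 m2 \<phi> \<Longrightarrow> alg_iso m2 m3 \<psi> \<Longrightarrow> alg_iso m1 m3 (\<psi> \<circ> \<phi>)"
  by (simp add: alg_iso_def linear_compose bij_comp del: split_paired_All)

lemma alg_isomorphicI: "alg_iso m1 m2 \<phi> \<Longrightarrow> alg_isomorphic m1 m2"
  unfolding alg_isomorphic_def by blast

lemma alg_isomorphic_sym: "alg_isomorphic m1 m2 \<Longrightarrow> alg_isomorphic m2 m1"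
  unfolding alg_isomorphic_def using alg_iso_inv by blast

lemma alg_isomorphic_trans:
  "alg_isomorphic m1 m2 \<Longrightarrow> alg_isomorphic m2 m3 \<Longrightarrow> alg_isomorphic m1 m3"
  unfolding alg_isomorphic_def using alg_iso_comp by blast

lemma bij_if_inverse: "(\<And>x. g (f x) = x) \<Longrightarrow> (\<And>y. f (g y) = y) \<Longrightarrow> bij f"
  by (rule o_bij[of g]) (auto simp: fun_eq_iff)

lemma omult_Pair: "(x, y) \<bullet>\<^sub>O (u, v) = (x \<cdot>\<^sub>q u - qcnj v \<cdot>\<^sub>q y, y \<cdot>\<^sub>q qcnj u + v \<cdot>\<^sub>q x)"
  by (simp add: omult_def)

lemma alg_iso_HH_mult_if_intertwines:
  assumes "alg_iso (\<bullet>\<^sub>O) (\<bullet>\<^sub>O) \<theta>"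
    and "\<And>x y. \<theta> (f x, g y) = map_prod f' g' (\<theta> (x, y))"
  shows "alg_iso (HH_mult f g) (HH_mult f' g') \<theta>"
  using assms unfolding alg_iso_def HH_mult_def
  by (auto simp: map_prod_def split: prod.split)

definition oct_conjugate :: "quat \<Rightarrow> oct \<Rightarrow> oct" where
  "oct_conjugate p = map_prod (\<lambda>x. p \<cdot>\<^sub>q x \<cdot>\<^sub>q qcnj p) (\<lambda>y. p \<cdot>\<^sub>q y \<cdot>\<^sub>q qcnj p)"

definition oct_lmult_snd :: "quat \<Rightarrow> oct \<Rightarrow> oct" where
  "oct_lmult_snd c = map_prod id (\<lambda>y. c \<cdot>\<^sub>q y)"

lemma alg_iso_oct_conjugate:
  assumes "qnorm p = 1"
  shows "alg_iso (\<bullet>\<^sub>O) (\<bullet>\<^sub>O) (oct_conjugate p)"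
  unfolding alg_iso_def
proof (intro conjI allI)
  show "linear (oct_conjugate p)"
    by (rule linearI) (auto simp: oct_conjugate_def quat_algebra)
  show "bij (oct_conjugate p)"
    by (rule bij_if_inverse[where g="oct_conjugate (qcnj p)"])
      (auto simp: oct_conjugate_def quat_algebra unit_quat_cancel[OF assms])
  show "oct_conjugate p (z \<bullet>\<^sub>O w) = oct_conjugate p z \<bullet>\<^sub>O oct_conjugate p w" for z w
    by (cases z; cases w) (simp add: oct_conjugate_def omult_Pair quat_algebra unit_quat_cancel[OF assms])
qed

lemma alg_iso_oct_lmult_snd:
  assumes "qnorm c = 1"
  shows "alg_iso (\<bullet>\<^sub>O) (\<bullet>\<^sub>O) (oct_lmult_snd c)"
  unfolding alg_iso_def
proof (intro conjI allI)
  show "linear (oct_lmult_snd c)"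
    by (rule linearI) (auto simp: oct_lmult_snd_def quat_algebra)
  show "bij (oct_lmult_snd c)"
    by (rule bij_if_inverse[where g="oct_lmult_snd (qcnj c)"])
      (auto simp: oct_lmult_snd_def quat_algebra unit_quat_cancel[OF assms])
  show "oct_lmult_snd c (z \<bullet>\<^sub>O w) = oct_lmult_snd c z \<bullet>\<^sub>O oct_lmult_snd c w" for z w
    by (cases z; cases w) (simp add: oct_lmult_snd_def omult_Pair quat_algebra unit_quat_cancel[OF assms])
qed

lemma alg_iso_HH_mult_oct_conjugate:
  assumes "qnorm p = 1"
  shows "alg_iso (HH_mult (qT a (qcnj a) \<circ> qcnj) id)
    (HH_mult (qT (p \<cdot>\<^sub>q a \<cdot>\<^sub>q qcnj p) (qcnj (p \<cdot>\<^sub>q a \<cdot>\<^sub>q qcnj p)) \<circ> qcnj) id)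
    (oct_conjugate p)"
  by (rule alg_iso_HH_mult_if_intertwines[OF alg_iso_oct_conjugate[OF assms]])
    (simp add: oct_conjugate_def qT_def quat_algebra unit_quat_cancel[OF assms])

lemma alg_iso_HH_mult_oct_lmult_snd:
  assumes "qnorm c = 1"
  shows "alg_iso (HH_mult id (\<lambda>y. - (qT b b \<circ> qcnj) y))
    (HH_mult id (\<lambda>y. - (qT (c \<cdot>\<^sub>q b) (c \<cdot>\<^sub>q b) \<circ> qcnj) y)) (oct_lmult_snd c)"
  by (rule alg_iso_HH_mult_if_intertwines[OF alg_iso_oct_lmult_snd[OF assms]])
    (simp add: oct_lmult_snd_def qT_def quat_algebra unit_quat_cancel[OF assms])

definition oct_signed_perm :: "oct \<Rightarrow> oct" where
  "oct_signed_perm = (\<lambda>(x, y). (Quat (qr x) (qr y) (qi x) (- qi y), Quat (qj x) (- qj y) (qk x) (qk y)))"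

lemma alg_iso_oct_signed_perm: "alg_iso (\<bullet>\<^sub>O) (\<bullet>\<^sub>O) oct_signed_perm"
  unfolding alg_iso_def
proof (intro conjI allI)
  show "linear oct_signed_perm"
    by (rule linearI) (auto simp: oct_signed_perm_def plus_quat_def scaleR_quat_def)
  show "bij oct_signed_perm"
    by (rule bij_if_inverse[where g="\<lambda>(x, y). (Quat (qr x) (qj x) (qr y) (qj y), Quat (qi x) (- qk x) (- qi y) (qk y))"])
      (auto simp: oct_signed_perm_def intro!: quat_eqI)
  show "oct_signed_perm (z \<bullet>\<^sub>O w) = oct_signed_perm z \<bullet>\<^sub>O oct_signed_perm w" for z w
    by (cases z; cases w) (simp add: omult_Pair oct_signed_perm_def; intro conjI quat_eqI; simp add: algebra_simps)
qed

lemma alg_iso_HH_mult_oct_signed_perm: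
  "alg_iso (HH_mult id (\<lambda>y. - qcnj y)) (HH_mult (qT qunit_i (qcnj qunit_i) \<circ> qcnj) id) oct_signed_perm"
  by (rule alg_iso_HH_mult_if_intertwines[OF alg_iso_oct_signed_perm])
    (simp add: oct_signed_perm_def qT_def; intro conjI quat_eqI; simp)

lemma alg_iso_starO_mult:
  "alg_iso starO_mult (HH_mult (qT qunit_i (qcnj qunit_i) \<circ> qcnj) id) (map_prod (\<lambda>x. - (x \<cdot>\<^sub>q qunit_i)) id)"
  unfolding alg_iso_def
proof (intro conjI allI)
  show "linear (map_prod (\<lambda>x. - (x \<cdot>\<^sub>q qunit_i)) id)"
    by (rule linearI) (auto simp: quat_algebra)
  show "bij (map_prod (\<lambda>x. - (x \<cdot>\<^sub>q qunit_i)) id)"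
    by (rule bij_if_inverse[where g="map_prod (\<lambda>x. x \<cdot>\<^sub>q qunit_i) id"])
      (auto intro!: quat_eqI)
  show "map_prod (\<lambda>x. - (x \<cdot>\<^sub>q qunit_i)) id (starO_mult z w) =
      HH_mult (qT qunit_i (qcnj qunit_i) \<circ> qcnj) id
        (map_prod (\<lambda>x. - (x \<cdot>\<^sub>q qunit_i)) id z) (map_prod (\<lambda>x. - (x \<cdot>\<^sub>q qunit_i)) id w)" for z w
    by (cases z; cases w)
      (simp add: starO_mult_def ocnj_def ounit_i_def HH_mult_def omult_Pair qT_def; intro conjI quat_eqI;
        simp add: algebra_simps)
qed

theorem corollary5:
  fixes a b :: quat
  assumes "a \<in> qImag" and "qnorm a = 1" and "qnorm b = 1"
  defines "A1 \<equiv> HH_mult (qT a (qcnj a) \<circ> qcnj) id"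
      and "A2 \<equiv> HH_mult id (\<lambda>y. - (qT b b \<circ> qcnj) y)"
      and "A3 \<equiv> starO_mult"
  shows "alg_isomorphic A1 A2 \<and> alg_isomorphic A2 A3 \<and> alg_isomorphic A1 A3"
proof -
  define B where "B = HH_mult (qT qunit_i (qcnj qunit_i) \<circ> qcnj) id"
  obtain p where "qnorm p = 1" and a: "a = p \<cdot>\<^sub>q qunit_i \<cdot>\<^sub>q qcnj p"
    using unit_imaginary_conjugate_qunit_i assms(1,2) .
  have "alg_isomorphic B A1"
    using alg_iso_HH_mult_oct_conjugate[OF \<open>qnorm p = 1\<close>, of qunit_i]
    unfolding A1_def B_def a by (rule alg_isomorphicI)
  moreover have "alg_isomorphic (HH_mult id (\<lambda>y. - qcnj y)) A2"
    using alg_iso_HH_mult_oct_lmult_snd[OF assms(3), of qone]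
    unfolding A2_def by (simp add: qT_def qmult_qone_left qmult_qone_right alg_isomorphicI)
  then have "alg_isomorphic B A2"
    using alg_iso_HH_mult_oct_signed_perm unfolding B_def
    by (blast intro: alg_isomorphicI alg_isomorphic_sym alg_isomorphic_trans)
  moreover have "alg_isomorphic B A3"
    using alg_iso_starO_mult unfolding A3_def B_def by (blast intro: alg_isomorphicI alg_isomorphic_sym)
  ultimately show ?thesis
    by (blast intro: alg_isomorphic_sym alg_isomorphic_trans)
qed

end
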